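(* Let $G=(V,E)$ and $G'=(V',E')$ be supply graphs having the strong uniqueness property with $V\cap V'=\{v\}$. Then their $1$-sum $G''=(V\cup V',E\cup E')$ has the strong uniqueness property.
   Context: A supply graph is a finite undirected graph (no loops, parallel edges allowed), with directed version replacing each edge by two opposite arcs. A demand digraph is a simple digraph $H=(T,L)$ with $T$ a subset of the vertex set; its arcs are OD-pairs; routes for $(o,d)\in L$ are directed $(o,d)$-paths in the directed version of the supply graph. Users form a bounded interval with Lebesgue measure, measurably partitioned by OD-pair; each user picks a route of his OD-pair (measurably); flow on an arc is the measure of users using it; users have nonnegative continuous strictly increasing arc cost functions (measurable in the user); an equilibrium is a profile where every user takes a minimal-cost route. $(G,H)$ has the uniqueness property if for every measurable partition of users into OD-pairs and every such cost assignment, the flow on each arc is the same in all equilibria. $G$ has the strong uniqueness property if $(G,H)$ has the uniqueness property for every demand digraph $H$ on a subset of its vertices. *)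

theory Defs
  imports "HOL-Analysis.Analysis"
begin

(* A supply graph: finite vertex set V, finite edge set E (abstract edge
   identifiers, so parallel edges are allowed), with an endpoint map ep.
   No loops. *)
definition supply_graph :: "'v set \<Rightarrow> 'e set \<Rightarrow> ('e \<Rightarrow> 'v \<times> 'v) \<Rightarrow> bool" where
  "supply_graph V E ep \<longleftrightarrow> finite V \<and> finite E \<and>
     (\<forall>e\<in>E. fst (ep e) \<in> V \<and> snd (ep e) \<in> V \<and> fst (ep e) \<noteq> snd (ep e))"

(* Directed version: each edge e gives two opposite arcs (e,True), (e,False). *)
definition arcs :: "'e set \<Rightarrow> ('e \<times> bool) set" where
  "arcs E = E \<times> UNIV"

definition arc_tail :: "('e \<Rightarrow> 'v \<times> 'v) \<Rightarrow> 'e \<times> bool \<Rightarrow> 'v" where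
  "arc_tail ep a = (if snd a then fst (ep (fst a)) else snd (ep (fst a)))"

definition arc_head :: "('e \<Rightarrow> 'v \<times> 'v) \<Rightarrow> 'e \<times> bool \<Rightarrow> 'v" where
  "arc_head ep a = (if snd a then snd (ep (fst a)) else fst (ep (fst a)))"

definition is_route :: "'e set \<Rightarrow> ('e \<Rightarrow> 'v \<times> 'v) \<Rightarrow> 'v \<Rightarrow> 'v \<Rightarrow> ('e \<times> bool) list \<Rightarrow> bool" where
  "is_route E ep s t P \<longleftrightarrow> P \<noteq> [] \<and> set P \<subseteq> arcs E \<and>
     arc_tail ep (hd P) = s \<and> arc_head ep (last P) = t \<and>
     (\<forall>i. Suc i < length P \<longrightarrow> arc_head ep (P ! i) = arc_tail ep (P ! Suc i)) \<and>
     distinct (s # map (arc_head ep) P)"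

definition demand_digraph :: "'v set \<Rightarrow> 'v set \<Rightarrow> ('v \<times> 'v) set \<Rightarrow> bool" where
  "demand_digraph V T L \<longleftrightarrow> T \<subseteq> V \<and> L \<subseteq> T \<times> T \<and> (\<forall>x. (x, x) \<notin> L)"

(* Users: a bounded interval I of reals with Lebesgue measure. *)
definition user_interval :: "real set \<Rightarrow> bool" where
  "user_interval I \<longleftrightarrow> is_interval I \<and> bounded I"

definition od_assignment :: "real set \<Rightarrow> ('v \<times> 'v) set \<Rightarrow> (real \<Rightarrow> 'v \<times> 'v) \<Rightarrow> bool" where
  "od_assignment I L od \<longleftrightarrow> (\<forall>x\<in>I. od x \<in> L) \<and>
     (\<forall>p\<in>L. {x\<in>I. od x = p} \<in> sets (lebesgue_on I))"

definition cost_assignment :: "real set \<Rightarrow> 'e set \<Rightarrow> (real \<Rightarrow> 'e \<times> bool \<Rightarrow> real \<Rightarrow> real) \<Rightarrow> bool" where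
  "cost_assignment I E c \<longleftrightarrow>
     (\<forall>x\<in>I. \<forall>a\<in>arcs E. (\<forall>t\<ge>0. c x a t \<ge> 0) \<and> continuous_on {0..} (c x a) \<and>
        strict_mono_on {0..} (c x a)) \<and>
     (\<forall>a\<in>arcs E. \<forall>t\<ge>0. (\<lambda>x. c x a t) \<in> borel_measurable (lebesgue_on I))"

definition strategy_profile :: "real set \<Rightarrow> 'e set \<Rightarrow> ('e \<Rightarrow> 'v \<times> 'v) \<Rightarrow> (real \<Rightarrow> 'v \<times> 'v)
     \<Rightarrow> (real \<Rightarrow> ('e \<times> bool) list) \<Rightarrow> bool" where
  "strategy_profile I E ep od \<sigma> \<longleftrightarrow>
     (\<forall>x\<in>I. is_route E ep (fst (od x)) (snd (od x)) (\<sigma> x)) \<and>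
     (\<forall>P. {x\<in>I. \<sigma> x = P} \<in> sets (lebesgue_on I))"

definition flow :: "real set \<Rightarrow> (real \<Rightarrow> ('e \<times> bool) list) \<Rightarrow> 'e \<times> bool \<Rightarrow> real" where
  "flow I \<sigma> a = measure (lebesgue_on I) {x\<in>I. a \<in> set (\<sigma> x)}"

definition route_cost :: "real set \<Rightarrow> (real \<Rightarrow> 'e \<times> bool \<Rightarrow> real \<Rightarrow> real) \<Rightarrow> (real \<Rightarrow> ('e \<times> bool) list)
     \<Rightarrow> real \<Rightarrow> ('e \<times> bool) list \<Rightarrow> real" where
  "route_cost I c \<sigma> x P = (\<Sum>a\<in>set P. c x a (flow I \<sigma> a))"

definition equilibrium :: "real set \<Rightarrow> 'e set \<Rightarrow> ('e \<Rightarrow> 'v \<times> 'v) \<Rightarrow> (real \<Rightarrow> 'v \<times> 'v)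
     \<Rightarrow> (real \<Rightarrow> 'e \<times> bool \<Rightarrow> real \<Rightarrow> real) \<Rightarrow> (real \<Rightarrow> ('e \<times> bool) list) \<Rightarrow> bool" where
  "equilibrium I E ep od c \<sigma> \<longleftrightarrow> strategy_profile I E ep od \<sigma> \<and>
     (\<forall>x\<in>I. \<forall>P. is_route E ep (fst (od x)) (snd (od x)) P \<longrightarrow>
         route_cost I c \<sigma> x (\<sigma> x) \<le> route_cost I c \<sigma> x P)"

definition uniqueness_property :: "'v set \<Rightarrow> 'e set \<Rightarrow> ('e \<Rightarrow> 'v \<times> 'v) \<Rightarrow> 'v set \<Rightarrow> ('v \<times> 'v) set \<Rightarrow> bool" where
  "uniqueness_property V E ep T L \<longleftrightarrow>
     (\<forall>I od c \<sigma> \<sigma>'. user_interval I \<longrightarrow> od_assignment I L od \<longrightarrow> cost_assignment I E c \<longrightarrow>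
        equilibrium I E ep od c \<sigma> \<longrightarrow> equilibrium I E ep od c \<sigma>' \<longrightarrow>
        (\<forall>a\<in>arcs E. flow I \<sigma> a = flow I \<sigma>' a))"

definition strong_uniqueness_property :: "'v set \<Rightarrow> 'e set \<Rightarrow> ('e \<Rightarrow> 'v \<times> 'v) \<Rightarrow> bool" where
  "strong_uniqueness_property V E ep \<longleftrightarrow>
     (\<forall>T L. demand_digraph V T L \<longrightarrow> uniqueness_property V E ep T L)"

end

theory Submission
  imports Defs
begin

(* By symmetry it
   suffices to show that two equilibria sigma, sigma' of any game on G'' have the same flow
   on the arcs of G.  Every route of G'' either stays inside one summand or crosses once
   from one summand to the other through v, so its part inside G is a route of G between
   the projections of its endpoints (vertices of G' collapse to v), and can be replaced by
   any other such route.  This turns an equilibrium of G'' into an equilibrium of a game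
   on G: users whose route avoids G become dummy users of one fixed arc a0, whose costs
   make a0 their unique best choice, and the costs of the remaining users are shifted by
   the dummy flow.  Uniqueness on G then yields equal flows for sigma and sigma'. *)

lemma route_source_not_head: "is_route F ep s t P \<Longrightarrow> s \<notin> arc_head ep ` set P"
  unfolding is_route_def by auto

lemma route_single:
  "is_route F ep s t [a] \<longleftrightarrow> a \<in> arcs F \<and> arc_tail ep a = s \<and> arc_head ep a = t \<and> s \<noteq> t"
  unfolding is_route_def by auto

lemma route_Cons:
  assumes "P \<noteq> []"
  shows "is_route F ep s t (a # P) \<longleftrightarrow>
    a \<in> arcs F \<and> arc_tail ep a = s \<and> s \<notin> arc_head ep ` set (a # P) \<and>
    is_route F ep (arc_head ep a) t P"
proof -
  obtain b Q where P: "P = b # Q" using assms by (cases P) auto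
  have chain: "(\<forall>i. Suc i < length (a # P) \<longrightarrow> arc_head ep ((a # P) ! i) = arc_tail ep ((a # P) ! Suc i))
      \<longleftrightarrow> arc_head ep a = arc_tail ep (hd P) \<and>
          (\<forall>i. Suc i < length P \<longrightarrow> arc_head ep (P ! i) = arc_tail ep (P ! Suc i))"
    unfolding P by (auto simp: All_less_Suc2)
  show ?thesis
    unfolding is_route_def chain using assms by auto
qed

lemma route_append:
  assumes "A \<noteq> []" "B \<noteq> []"
  shows "is_route F ep s t (A @ B) \<longleftrightarrow>
    is_route F ep s (arc_head ep (last A)) A \<and> is_route F ep (arc_head ep (last A)) t B \<and>
    set (s # map (arc_head ep) A) \<inter> set (map (arc_head ep) B) = {}"
  using assms
proof (induction A arbitrary: s)
  case Nil then show ?case by simp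
next
  case (Cons a A)
  show ?case
  proof (cases "A = []")
    case True
    then show ?thesis using Cons.prems route_source_not_head[of F ep "arc_head ep a" t B]
      by (auto simp: route_Cons route_single)
  next
    case False
    then show ?thesis using Cons by (auto simp: route_Cons)
  qed
qed

lemma route_mono: "is_route F ep s t P \<Longrightarrow> set P \<subseteq> arcs F' \<Longrightarrow> is_route F' ep s t P"
  unfolding is_route_def by auto

lemma route_arcs: "is_route F ep s t P \<Longrightarrow> set P \<subseteq> arcs F"
  unfolding is_route_def by auto

lemma route_nonempty: "is_route F ep s t P \<Longrightarrow> P \<noteq> []"
  unfolding is_route_def by auto

lemma route_target_head: "is_route F ep s t P \<Longrightarrow> t \<in> arc_head ep ` set P"
  unfolding is_route_def by (metis image_eqI last_in_set)

lemma arc_ends_in: "supply_graph V F ep \<Longrightarrow> a \<in> arcs F \<Longrightarrow> arc_tail ep a \<in> V \<and> arc_head ep a \<in> V"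
  unfolding supply_graph_def arcs_def arc_tail_def arc_head_def by auto

lemma route_vertices:
  assumes "supply_graph V F ep" "is_route F ep s t P"
  shows "s \<in> V" "arc_head ep ` set P \<subseteq> V"
proof -
  have arcs: "set P \<subseteq> arcs F" and "hd P \<in> set P" "s = arc_tail ep (hd P)"
    using assms(2) unfolding is_route_def by auto
  then show "s \<in> V" using arc_ends_in[OF assms(1)] by blast
  show "arc_head ep ` set P \<subseteq> V" using arcs arc_ends_in[OF assms(1)] by blast
qed

lemma route_endpoints:
  assumes "supply_graph V F ep" "is_route F ep s t P"
  shows "s \<in> V" "t \<in> V" "s \<noteq> t"
  using route_vertices[OF assms] route_target_head[OF assms(2)] route_source_not_head[OF assms(2)]
  by auto

lemma arc_route:
  assumes "supply_graph V F ep" "a \<in> arcs F"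
  shows "is_route F ep (arc_tail ep a) (arc_head ep a) [a]"
  using assms unfolding route_single supply_graph_def arcs_def arc_tail_def arc_head_def by auto

lemma arcs_Un: "arcs (E \<union> E') = arcs E \<union> arcs E'"
  unfolding arcs_def by auto

lemma route_Un_left: "is_route E ep s t P \<Longrightarrow> is_route (E \<union> E') ep s t P"
  and route_Un_right: "is_route E' ep s t P \<Longrightarrow> is_route (E \<union> E') ep s t P"
  unfolding is_route_def arcs_Un by auto

(* A route visits every arc at most once, so a finite graph has finitely many routes;
   in particular a cheapest route exists for every cost function on routes. *)
lemma routes_finite:
  assumes "finite E"
  shows "finite {P. \<exists>s t. is_route E ep s t P}"
proof (rule finite_subset)
  show "{P. \<exists>s t. is_route E ep s t P} \<subseteq> {P. set P \<subseteq> arcs E \<and> length P \<le> card (arcs E)}"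
  proof clarify
    fix P s t assume "is_route E ep s t P"
    then have "distinct P" "set P \<subseteq> arcs E" unfolding is_route_def by (auto simp: distinct_map)
    moreover have "finite (arcs E)" using assms unfolding arcs_def by simp
    ultimately show "set P \<subseteq> arcs E \<and> length P \<le> card (arcs E)"
      by (metis card_mono distinct_card)
  qed
  show "finite {P. set P \<subseteq> arcs E \<and> length P \<le> card (arcs E)}"
    using assms by (intro finite_lists_length_le) (simp add: arcs_def)
qed

lemma cheapest_route_exists:
  assumes "finite E" "is_route E ep s t P"
  shows "\<exists>P. is_route E ep s t P \<and> (\<forall>Q. is_route E ep s t Q \<longrightarrow> f P \<le> (f Q :: real))"
proof -
  let ?R = "{P. is_route E ep s t P}"
  have "finite ?R" by (rule finite_subset[OF _ routes_finite[OF assms(1)]]) auto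
  moreover have "?R \<noteq> {}" using assms(2) by auto
  ultimately obtain P where "is_arg_min f (\<lambda>P. P \<in> ?R) P"
    using ex_is_arg_min_if_finite by blast
  then show ?thesis unfolding is_arg_min_linorder by auto
qed

definition crossing :: "('e \<Rightarrow> 'v \<times> 'v) \<Rightarrow> 'v \<Rightarrow> 'e set \<Rightarrow> 'e set \<Rightarrow> ('e \<times> bool) list \<Rightarrow> bool" where
  "crossing ep v E1 E2 P \<longleftrightarrow> (\<exists>A B. P = A @ B \<and> A \<noteq> [] \<and> B \<noteq> [] \<and> arc_head ep (last A) = v \<and>
     set A \<subseteq> arcs E1 \<and> set B \<subseteq> arcs E2)"

(* Everything in this locale is also available with the roles of G and G'
   exchanged, via the interpretation provided by lemma swap. *)
locale one_sum =
  fixes V V' :: "'v set" and E E' :: "'e set" and ep :: "'e \<Rightarrow> 'v \<times> 'v" and v :: 'v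
  assumes G: "supply_graph V E ep" and G': "supply_graph V' E' ep" and cut: "V \<inter> V' = {v}"
begin

lemma swap: "one_sum V' V E' E ep v"
  using G G' cut by unfold_locales auto

(* No edge can lie in both summands, since it would be a loop at v. *)
lemma arcs_disjoint: "arcs E \<inter> arcs E' = {}"
proof -
  have "E \<inter> E' = {}"
  proof (rule ccontr)
    assume "E \<inter> E' \<noteq> {}"
    then obtain e where "e \<in> E" "e \<in> E'" by auto
    then have "fst (ep e) \<in> V \<inter> V'" "snd (ep e) \<in> V \<inter> V'" "fst (ep e) \<noteq> snd (ep e)"
      using G G' unfolding supply_graph_def by auto
    then show False using cut by auto
  qed
  then show ?thesis unfolding arcs_def by auto
qed

lemma junction_at_cut:
  assumes "a \<in> arcs E" "b \<in> arcs E'" "arc_head ep a = arc_tail ep b"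
  shows "arc_head ep a = v"
  using arc_ends_in[OF G assms(1)] arc_ends_in[OF G' assms(2)] assms(3) cut by auto

(* The last case is impossible
   since the crossing would visit v a second time. *)
lemma prepend_arc:
  assumes a: "a \<in> arcs E" and P: "P \<noteq> []" and link: "arc_head ep a = arc_tail ep (hd P)"
    and fresh: "arc_head ep a \<notin> arc_head ep ` set P"
    and shape: "set P \<subseteq> arcs E \<or> set P \<subseteq> arcs E' \<or> crossing ep v E E' P \<or> crossing ep v E' E P"
  shows "set (a # P) \<subseteq> arcs E \<or> crossing ep v E E' (a # P)"
  using shape
proof (elim disjE)
  assume "set P \<subseteq> arcs E'"
  moreover have "hd P \<in> set P" using P by simp
  ultimately have "arc_head ep a = v" using junction_at_cut[OF a _ link] by blast
  then show ?thesis using \<open>set P \<subseteq> arcs E'\<close> a P unfolding crossing_def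
    by (intro disjI2 exI[of _ "[a]"] exI[of _ P]) auto
next
  assume "crossing ep v E E' P"
  then obtain A B where "P = A @ B" "A \<noteq> []" "B \<noteq> []" "arc_head ep (last A) = v"
    "set A \<subseteq> arcs E" "set B \<subseteq> arcs E'" unfolding crossing_def by blast
  then show ?thesis using a unfolding crossing_def
    by (intro disjI2 exI[of _ "a # A"] exI[of _ B]) auto
next
  assume "crossing ep v E' E P"
  then obtain A B where AB: "P = A @ B" "A \<noteq> []" "arc_head ep (last A) = v" "set A \<subseteq> arcs E'"
    unfolding crossing_def by blast
  moreover have "hd P \<in> arcs E'" using AB by (auto simp: hd_append)
  ultimately have "arc_head ep a = v" using junction_at_cut[OF a _ link] by simp
  moreover have "v \<in> arc_head ep ` set P" using AB by auto
  ultimately show ?thesis using fresh by simp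
qed (use a in auto)

lemma route_shape:
  "is_route (E \<union> E') ep s t P \<Longrightarrow>
    set P \<subseteq> arcs E \<or> set P \<subseteq> arcs E' \<or> crossing ep v E E' P \<or> crossing ep v E' E P"
proof (induction P arbitrary: s)
  case Nil then show ?case by simp
next
  case (Cons a P)
  show ?case
  proof (cases "P = []")
    case True
    then show ?thesis using route_arcs[OF Cons.prems] by (auto simp: arcs_Un)
  next
    case False
    then have a: "a \<in> arcs E \<union> arcs E'" and R: "is_route (E \<union> E') ep (arc_head ep a) t P"
      using Cons.prems by (auto simp: route_Cons arcs_Un)
    have link: "arc_head ep a = arc_tail ep (hd P)" using R unfolding is_route_def by simp
    note fresh = route_source_not_head[OF R]
    note shape = Cons.IH[OF R]
    interpret sw: one_sum V' V E' E ep v by (rule swap)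
    from a show ?thesis
    proof
      assume "a \<in> arcs E"
      then show ?thesis using prepend_arc[OF _ False link fresh shape] by blast
    next
      assume "a \<in> arcs E'"
      then show ?thesis using sw.prepend_arc[OF _ False link fresh] shape by blast
    qed
  qed
qed

lemma crossing_route:
  assumes R: "is_route (E \<union> E') ep s t P" and X: "crossing ep v E E' P"
  obtains A B where "P = A @ B" "is_route E ep s v A" "is_route E' ep v t B"
proof -
  obtain A B where AB: "P = A @ B" "A \<noteq> []" "B \<noteq> []" "arc_head ep (last A) = v"
    "set A \<subseteq> arcs E" "set B \<subseteq> arcs E'" using X unfolding crossing_def by blast
  then show ?thesis using R route_append[of A B] route_mono that by metis
qed

(* Conversely, a route of G into v followed by a route of G' out of v is a route of the
   1-sum, because the two pieces share no vertex other than v. *)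
lemma route_concat_at_cut:
  assumes A: "is_route E ep s v A" and B: "is_route E' ep v t B"
  shows "is_route (E \<union> E') ep s t (A @ B)"
proof -
  have "set (s # map (arc_head ep) A) \<subseteq> V" using route_vertices[OF G A] by auto
  moreover have "set (map (arc_head ep) B) \<subseteq> V' - {v}"
    using route_vertices[OF G' B] route_source_not_head[OF B] by auto
  ultimately have disj: "set (s # map (arc_head ep) A) \<inter> set (map (arc_head ep) B) = {}"
    using cut by blast
  have v: "arc_head ep (last A) = v" using A unfolding is_route_def by simp
  then show ?thesis
    using route_append[OF route_nonempty[OF A] route_nonempty[OF B], of "E \<union> E'" ep s t] disj v
      route_Un_left[OF A, of E'] route_Un_right[OF B, of E] by simp
qed

lemma route_cases:
  assumes R: "is_route (E \<union> E') ep s t P"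
  obtains (left) "is_route E ep s t P"
    | (right) "is_route E' ep s t P"
    | (left_right) A B where "P = A @ B" "is_route E ep s v A" "is_route E' ep v t B"
    | (right_left) A B where "P = A @ B" "is_route E' ep s v A" "is_route E ep v t B"
proof -
  interpret sw: one_sum V' V E' E ep v by (rule swap)
  have R': "is_route (E' \<union> E) ep s t P" using R by (simp add: Un_commute)
  from route_shape[OF R] show thesis
  proof (elim disjE)
    assume "set P \<subseteq> arcs E" then show thesis using route_mono[OF R] left by blast
  next
    assume "set P \<subseteq> arcs E'" then show thesis using route_mono[OF R] right by blast
  next
    assume "crossing ep v E E' P" then show thesis using crossing_route[OF R] left_right by blast
  next
    assume "crossing ep v E' E P" then show thesis using sw.crossing_route[OF R'] right_left by blast
  qed
qed

(* A user of
   the 1-sum whose origin and destination have distinct projections is seen by G as a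
   user of the projected OD-pair; all others never touch G. *)
definition proj :: "'v \<Rightarrow> 'v" where
  "proj y = (if y \<in> V then y else v)"

lemma proj_in: "proj y \<in> V"
  using cut unfolding proj_def by auto

lemma proj_other_side: "y \<in> V' \<Longrightarrow> proj y = v"
  using cut unfolding proj_def by auto

lemma proj_crossing:
  assumes "is_route E ep s v A" "is_route E' ep v t B"
  shows "proj s = s" "proj t = v" "s \<noteq> v"
proof -
  have "s \<in> V" "s \<noteq> v" "t \<in> V'" "t \<noteq> v"
    using route_endpoints[OF G assms(1)] route_endpoints[OF G' assms(2)] by auto
  moreover from this have "t \<notin> V" using cut by blast
  ultimately show "proj s = s" "proj t = v" "s \<noteq> v" by (simp_all add: proj_def)
qed

lemma proj_crossing_back:
  assumes "is_route E' ep s v A" "is_route E ep v t B"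
  shows "proj s = v" "proj t = t" "t \<noteq> v"
proof -
  have "s \<in> V'" "s \<noteq> v" "t \<in> V" "t \<noteq> v"
    using route_endpoints[OF G' assms(1)] route_endpoints[OF G assms(2)] by auto
  moreover from this have "s \<notin> V" using cut by blast
  ultimately show "proj s = v" "proj t = t" "t \<noteq> v" by (simp_all add: proj_def)
qed

lemma proj_trivial:
  assumes R: "is_route (E \<union> E') ep s t P" and eq: "proj s = proj t"
  shows "set P \<inter> arcs E = {}"
  using R
proof (cases rule: route_cases)
  case left
  then show ?thesis using route_endpoints[OF G left] eq by (simp add: proj_def)
next
  case right
  then show ?thesis using route_arcs[OF right] arcs_disjoint by auto
next
  case (left_right A B)
  then show ?thesis using proj_crossing[OF left_right(2,3)] eq by simp
next
  case (right_left A B)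
  then show ?thesis using proj_crossing_back[OF right_left(2,3)] eq by simp
qed

lemma proj_route:
  assumes R: "is_route (E \<union> E') ep s t P" and ne: "proj s \<noteq> proj t"
  shows "is_route E ep (proj s) (proj t) (filter (\<lambda>a. a \<in> arcs E) P)"
  using R
proof (cases rule: route_cases)
  case left
  have "proj s = s" "proj t = t" "filter (\<lambda>a. a \<in> arcs E) P = P"
    using route_endpoints[OF G left] route_arcs[OF left] by (auto simp: proj_def filter_id_conv)
  then show ?thesis using left by simp
next
  case right
  then show ?thesis using route_endpoints[OF G' right] ne by (simp add: proj_other_side)
next
  case (left_right A B)
  have "filter (\<lambda>a. a \<in> arcs E) A = A" "filter (\<lambda>a. a \<in> arcs E) B = []"
    using route_arcs[OF left_right(2)] route_arcs[OF left_right(3)] arcs_disjoint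
    by (auto intro!: filter_True filter_False)
  then have "filter (\<lambda>a. a \<in> arcs E) P = A" using left_right(1) by simp
  then show ?thesis using left_right proj_crossing[OF left_right(2,3)] by simp
next
  case (right_left A B)
  have "filter (\<lambda>a. a \<in> arcs E) A = []" "filter (\<lambda>a. a \<in> arcs E) B = B"
    using route_arcs[OF right_left(2)] route_arcs[OF right_left(3)] arcs_disjoint
    by (auto intro!: filter_True filter_False)
  then have "filter (\<lambda>a. a \<in> arcs E) P = B" using right_left(1) by simp
  then show ?thesis using right_left proj_crossing_back[OF right_left(2,3)] by simp
qed

lemma proj_reroute:
  assumes R: "is_route (E \<union> E') ep s t P" and ne: "proj s \<noteq> proj t"
    and Q: "is_route E ep (proj s) (proj t) Q"
  obtains P' where "is_route (E \<union> E') ep s t P'" "set P' = set Q \<union> (set P - arcs E)"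
  using R
proof (cases rule: route_cases)
  case left
  then have "proj s = s" "proj t = t" "set P - arcs E = {}"
    using route_endpoints[OF G left] route_arcs[OF left] by (auto simp: proj_def)
  then show ?thesis using that route_Un_left[OF Q] by auto
next
  case right
  then show ?thesis using route_endpoints[OF G' right] ne by (simp add: proj_other_side)
next
  case (left_right A B)
  note ends = proj_crossing[OF left_right(2,3)]
  have "set P - arcs E = set B"
    using left_right route_arcs[OF left_right(2)] route_arcs[OF left_right(3)] arcs_disjoint by auto
  then show ?thesis using that route_concat_at_cut[of s "Q" t B] Q left_right ends by auto
next
  case (right_left A B)
  interpret sw: one_sum V' V E' E ep v by (rule swap)
  note ends = proj_crossing_back[OF right_left(2,3)]
  have "set P - arcs E = set A"
    using right_left route_arcs[OF right_left(2)] route_arcs[OF right_left(3)] arcs_disjoint by auto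
  moreover have "is_route (E \<union> E') ep s t (A @ Q)"
    using sw.route_concat_at_cut[of s A t Q] Q right_left ends by (simp add: Un_commute)
  ultimately show ?thesis using that[of "A @ Q"] by auto
qed

end

lemma user_interval_lmeasurable: "user_interval I \<Longrightarrow> I \<in> lmeasurable"
  unfolding user_interval_def by (simp add: is_interval_convex measurable_convex)

lemma user_interval_finite_measure: "user_interval I \<Longrightarrow> finite_measure (lebesgue_on I)"
  using user_interval_lmeasurable finite_measure_lebesgue_on by blast

lemma measurable_finite_valued:
  assumes "finite S" "\<forall>x\<in>I. f x \<in> S" "\<forall>y\<in>S. {x\<in>I. f x = y} \<in> sets (lebesgue_on I)"
  shows "{x\<in>I. \<Phi> (f x)} \<in> sets (lebesgue_on I)"
proof -
  have "{x\<in>I. \<Phi> (f x)} = (\<Union>y\<in>{y\<in>S. \<Phi> y}. {x\<in>I. f x = y})" using assms(2) by auto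
  also have "\<dots> \<in> sets (lebesgue_on I)" using assms(1,3) by (intro sets.finite_UN) auto
  finally show ?thesis .
qed

lemma null_set_user_interval:
  assumes "user_interval I" "Z \<in> sets (lebesgue_on I)" "measure (lebesgue_on I) Z = 0"
  shows "Z \<in> null_sets (lebesgue_on I)"
proof -
  interpret finite_measure "lebesgue_on I" using user_interval_finite_measure[OF assms(1)] .
  show ?thesis using assms(2,3) by (simp add: null_sets_def emeasure_eq_measure)
qed

(* Lebesgue measure on an interval is complete: subsets of null sets are measurable. *)
lemma subset_null_measurable:
  assumes "user_interval I" "Z \<in> null_sets (lebesgue_on I)" "A \<subseteq> Z"
  shows "A \<in> sets (lebesgue_on I)"
proof -
  have I: "I \<in> sets lebesgue" using user_interval_lmeasurable[OF assms(1)] by (simp add: fmeasurableD)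
  have "Z \<in> null_sets lebesgue" using assms(2) I by (simp add: null_sets_restrict_space)
  then have "A \<in> null_sets lebesgue" using null_sets_completion_subset assms(3) by blast
  moreover have "A \<subseteq> I" using assms(2,3) null_setsD2 sets.sets_into_space by fastforce
  ultimately show ?thesis using I by (simp add: sets_restrict_space_iff null_setsD2)
qed

definition shifted_cost :: "real \<Rightarrow> real \<Rightarrow> (real \<Rightarrow> real) \<Rightarrow> real \<Rightarrow> real" where
  "shifted_cost s0 M f t = (if t \<le> M + s0 then f 0 + (f s0 - f 0) * t / (M + s0) else f (t - M))"

lemma shifted_cost_shift:
  assumes "0 < s0" "0 \<le> M" "s0 \<le> F"
  shows "shifted_cost s0 M f (M + F) = f F"
  using assms by (cases "F = s0") (auto simp: shifted_cost_def)

lemma shifted_cost_at_shift: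
  assumes "0 < s0" "0 \<le> M" "f 0 \<le> f s0"
  shows "f 0 \<le> shifted_cost s0 M f M"
proof -
  have "0 \<le> (f s0 - f 0) * M / (M + s0)" using assms by simp
  then show ?thesis using assms by (simp add: shifted_cost_def)
qed

lemma shifted_cost_admissible:
  assumes s0: "0 < s0" and M: "0 \<le> M" and nn: "\<forall>t\<ge>0. f t \<ge> 0"
    and ct: "continuous_on {0..} f" and sm: "strict_mono_on {0..} f"
  shows "(\<forall>t\<ge>0. shifted_cost s0 M f t \<ge> 0) \<and> continuous_on {0..} (shifted_cost s0 M f) \<and>
    strict_mono_on {0..} (shifted_cost s0 M f)"
proof -
  have f01: "f 0 < f s0" using sm s0 by (auto simp: strict_mono_on_def)
  have Ms: "0 < M + s0" using s0 M by simp
  have "shifted_cost s0 M f t \<ge> 0" if "t \<ge> 0" for t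
    using that nn f01 Ms s0 by (auto simp: shifted_cost_def)
  moreover have "continuous_on {0..} (shifted_cost s0 M f)"
    unfolding shifted_cost_def
  proof (rule continuous_on_cases_1)
    show "continuous_on {t \<in> {0..}. t \<le> M + s0} (\<lambda>t. f 0 + (f s0 - f 0) * t / (M + s0))"
      using Ms by (intro continuous_intros) auto
    have "(\<lambda>t. t - M) ` {t \<in> {0::real..}. M + s0 \<le> t} \<subseteq> {0..}" using s0 by auto
    then show "continuous_on {t \<in> {0..}. M + s0 \<le> t} (\<lambda>t. f (t - M))"
      using continuous_on_compose2[OF ct continuous_on_diff[OF continuous_on_id continuous_on_const]]
      by blast
    show "M + s0 \<in> {0..} \<Longrightarrow> f 0 + (f s0 - f 0) * (M + s0) / (M + s0) = f (M + s0 - M)"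
      using Ms by simp
  qed
  moreover have "strict_mono_on {0..} (shifted_cost s0 M f)"
  proof (rule strict_mono_onI)
    fix r t :: real assume "r \<in> {0..}" and rt: "r < t"
    consider "t \<le> M + s0" | "r \<le> M + s0" "M + s0 < t" | "M + s0 < r" using rt by linarith
    then show "shifted_cost s0 M f r < shifted_cost s0 M f t"
    proof cases
      case 1
      then show ?thesis using f01 rt Ms by (simp add: shifted_cost_def divide_strict_right_mono)
    next
      case 2
      have "(f s0 - f 0) * r / (M + s0) \<le> (f s0 - f 0) * (M + s0) / (M + s0)"
        using f01 2 Ms by (intro divide_right_mono mult_left_mono) auto
      then have "shifted_cost s0 M f r \<le> f s0" using 2 Ms by (simp add: shifted_cost_def)
      also have "f s0 < f (t - M)" using sm 2 s0 by (auto simp: strict_mono_on_def)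
      finally show ?thesis using 2 by (simp add: shifted_cost_def)
    next
      case 3
      then show ?thesis using sm rt s0 M by (auto simp: shifted_cost_def strict_mono_on_def)
    qed
  qed
  ultimately show ?thesis by blast
qed

(* Reduction of a game on the 1-sum to a game on G.  Users whose OD-pair projects to two
   distinct vertices keep the projected OD-pair; all other users become dummy users of
   the fixed arc a0, which is made so cheap for them (dummy_cost) that they never
   leave it, while for the other users the cost of every arc is shifted right by the
   dummy flow it carries (extra).  The number s0 will be a lower bound for all
   positive flows on G in the equilibria considered. *)
locale side_reduction = one_sum V V' E E' ep v
  for V V' :: "'v set" and E E' :: "'e set" and ep :: "'e \<Rightarrow> 'v \<times> 'v" and v :: 'v +
  fixes L :: "('v \<times> 'v) set" and I :: "real set" and od :: "real \<Rightarrow> 'v \<times> 'v"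
    and c :: "real \<Rightarrow> 'e \<times> bool \<Rightarrow> real \<Rightarrow> real" and a0 :: "'e \<times> bool" and s0 :: real
  assumes finite_L: "finite L" and users: "user_interval I" and od: "od_assignment I L od"
    and costs: "cost_assignment I (E \<union> E') c" and a0: "a0 \<in> arcs E" and s0: "0 < s0"
begin

definition relevant :: "'v \<times> 'v \<Rightarrow> bool" where
  "relevant p \<longleftrightarrow> proj (fst p) \<noteq> proj (snd p)"

definition proj_pair :: "'v \<times> 'v \<Rightarrow> 'v \<times> 'v" where
  "proj_pair p = (proj (fst p), proj (snd p))"

definition dummy_pair :: "'v \<times> 'v" where
  "dummy_pair = (arc_tail ep a0, arc_head ep a0)"

definition od_proj :: "real \<Rightarrow> 'v \<times> 'v" where
  "od_proj x = (if relevant (od x) then proj_pair (od x) else dummy_pair)"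

definition L_proj :: "('v \<times> 'v) set" where
  "L_proj = proj_pair ` {p\<in>L. relevant p} \<union> {dummy_pair}"

definition dummy_mass :: real where
  "dummy_mass = measure (lebesgue_on I) {x\<in>I. \<not> relevant (od x)}"

definition extra :: "'e \<times> bool \<Rightarrow> real" where
  "extra a = (if a = a0 then dummy_mass else 0)"

definition dummy_cost :: "'e \<times> bool \<Rightarrow> real \<Rightarrow> real" where
  "dummy_cost a t = (if a = a0 then t / (1 + t) else 1 + t)"

definition cost_proj :: "real \<Rightarrow> 'e \<times> bool \<Rightarrow> real \<Rightarrow> real" where
  "cost_proj x a t = (if relevant (od x) then shifted_cost s0 (extra a) (c x a) t else dummy_cost a t)"

lemma od_in: "x \<in> I \<Longrightarrow> od x \<in> L"
  using od unfolding od_assignment_def by auto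

lemma measurable_od: "{x\<in>I. \<Phi> (od x)} \<in> sets (lebesgue_on I)"
  using od finite_L unfolding od_assignment_def by (intro measurable_finite_valued) auto

lemma extra_nonneg: "0 \<le> extra a"
  unfolding extra_def dummy_mass_def by simp

lemma demand_proj: "demand_digraph V V L_proj"
  using arc_ends_in[OF G a0] arc_route[OF G a0] proj_in
  unfolding demand_digraph_def L_proj_def proj_pair_def relevant_def dummy_pair_def route_single
  by auto

lemma od_assignment_proj: "od_assignment I L_proj od_proj"
  unfolding od_assignment_def
proof (intro conjI ballI)
  fix x assume "x \<in> I" then show "od_proj x \<in> L_proj"
    using od_in unfolding od_proj_def L_proj_def by auto
next
  fix q
  have "{x\<in>I. od_proj x = q} = {x\<in>I. (if relevant (od x) then proj_pair (od x) else dummy_pair) = q}"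
    unfolding od_proj_def ..
  also have "\<dots> \<in> sets (lebesgue_on I)" by (rule measurable_od)
  finally show "{x\<in>I. od_proj x = q} \<in> sets (lebesgue_on I)" .
qed

lemma dummy_cost_admissible:
  "(\<forall>t\<ge>0. dummy_cost a t \<ge> 0) \<and> continuous_on {0..} (dummy_cost a) \<and> strict_mono_on {0..} (dummy_cost a)"
proof (cases "a = a0")
  case True
  have "continuous_on {0::real..} (\<lambda>t. t / (1 + t))" by (intro continuous_intros) auto
  moreover have "strict_mono_on {0::real..} (\<lambda>t. t / (1 + t))"
    by (rule strict_mono_onI) (simp add: field_simps)
  ultimately show ?thesis using True unfolding dummy_cost_def by auto
next
  case False
  have "continuous_on {0::real..} (\<lambda>t. 1 + t)" by (intro continuous_intros)
  moreover have "strict_mono_on {0::real..} (\<lambda>t. 1 + t)" by (rule strict_mono_onI) auto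
  ultimately show ?thesis using False unfolding dummy_cost_def by auto
qed

lemma cost_admissible:
  "x \<in> I \<Longrightarrow> a \<in> arcs E \<Longrightarrow>
     (\<forall>t\<ge>0. c x a t \<ge> 0) \<and> continuous_on {0..} (c x a) \<and> strict_mono_on {0..} (c x a)"
  using costs unfolding cost_assignment_def arcs_Un by auto

lemma cost_measurable: "a \<in> arcs E \<Longrightarrow> t \<ge> 0 \<Longrightarrow> (\<lambda>x. c x a t) \<in> borel_measurable (lebesgue_on I)"
  using costs unfolding cost_assignment_def arcs_Un by auto

lemma shifted_cost_measurable:
  assumes a: "a \<in> arcs E" and t: "0 \<le> t"
  shows "(\<lambda>x. shifted_cost s0 (extra a) (c x a) t) \<in> borel_measurable (lebesgue_on I)"
proof (cases "t \<le> extra a + s0")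
  case True
  then show ?thesis
    using cost_measurable[OF a, of 0] cost_measurable[OF a, of s0] s0
    by (simp add: shifted_cost_def)
next
  case False
  then show ?thesis using cost_measurable[OF a, of "t - extra a"] s0 by (simp add: shifted_cost_def)
qed

lemma cost_assignment_proj: "cost_assignment I E cost_proj"
  unfolding cost_assignment_def
proof (rule conjI; intro ballI allI impI)
  fix x a assume x: "x \<in> I" and a: "a \<in> arcs E"
  show "(\<forall>t\<ge>0. cost_proj x a t \<ge> 0) \<and> continuous_on {0..} (cost_proj x a) \<and>
    strict_mono_on {0..} (cost_proj x a)"
  proof (cases "relevant (od x)")
    case True
    then have "cost_proj x a = shifted_cost s0 (extra a) (c x a)" unfolding cost_proj_def by auto
    then show ?thesis using shifted_cost_admissible[OF s0 extra_nonneg] cost_admissible[OF x a] by metis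
  next
    case False
    then have "cost_proj x a = dummy_cost a" unfolding cost_proj_def by auto
    then show ?thesis using dummy_cost_admissible by metis
  qed
next
  fix a and t :: real assume a: "a \<in> arcs E" and t: "0 \<le> t"
  have "{x. relevant (od x)} \<inter> space (lebesgue_on I) \<in> sets (lebesgue_on I)"
    using measurable_od[of relevant] by (simp add: Collect_conj_eq Int_commute)
  from measurable_If_set[OF shifted_cost_measurable[OF a t] measurable_const this]
  show "(\<lambda>x. cost_proj x a t) \<in> borel_measurable (lebesgue_on I)"
    unfolding cost_proj_def by simp
qed

definition proj_route_cost :: "real \<Rightarrow> ('e \<times> bool \<Rightarrow> real) \<Rightarrow> ('e \<times> bool) list \<Rightarrow> real" where
  "proj_route_cost x fl P = (\<Sum>a\<in>set P. cost_proj x a (fl a))"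

definition cheapest :: "('e \<times> bool \<Rightarrow> real) \<Rightarrow> real \<Rightarrow> ('e \<times> bool) list" where
  "cheapest fl x = (SOME P. is_route E ep (fst (od_proj x)) (snd (od_proj x)) P \<and>
     (\<forall>Q. is_route E ep (fst (od_proj x)) (snd (od_proj x)) Q \<longrightarrow>
        proj_route_cost x fl P \<le> proj_route_cost x fl Q))"

lemma cheapest_route:
  assumes "is_route E ep (fst (od_proj x)) (snd (od_proj x)) P"
  shows "is_route E ep (fst (od_proj x)) (snd (od_proj x)) (cheapest fl x)"
    and "is_route E ep (fst (od_proj x)) (snd (od_proj x)) Q \<Longrightarrow>
      proj_route_cost x fl (cheapest fl x) \<le> proj_route_cost x fl Q"
proof -
  have "finite E" using G unfolding supply_graph_def by simp
  from someI_ex[OF cheapest_route_exists[OF this assms]]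
  show "is_route E ep (fst (od_proj x)) (snd (od_proj x)) (cheapest fl x)"
    and "is_route E ep (fst (od_proj x)) (snd (od_proj x)) Q \<Longrightarrow>
      proj_route_cost x fl (cheapest fl x) \<le> proj_route_cost x fl Q"
    unfolding cheapest_def by blast+
qed

(* Dummy users are in equilibrium on a0: its cost is below 1, every other arc costs more. *)
lemma dummy_optimal:
  assumes irr: "\<not> relevant (od x)" and fl: "\<And>a. 0 \<le> fl a"
    and Q: "is_route E ep (fst (od_proj x)) (snd (od_proj x)) Q"
  shows "proj_route_cost x fl [a0] \<le> proj_route_cost x fl Q"
proof (cases "set Q = {a0}")
  case True
  then show ?thesis unfolding proj_route_cost_def by simp
next
  case False
  have cost: "cost_proj x a t = dummy_cost a t" for a t
    using irr unfolding cost_proj_def by simp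
  have "set Q \<noteq> {}" using route_nonempty[OF Q] by simp
  then have "\<not> set Q \<subseteq> {a0}" using False subset_singletonD by metis
  then obtain b where b: "b \<in> set Q" "b \<noteq> a0" by blast
  have "proj_route_cost x fl [a0] < 1"
    using fl[of a0] unfolding proj_route_cost_def cost dummy_cost_def by simp
  also have "1 \<le> cost_proj x b (fl b)"
    using fl[of b] b unfolding cost dummy_cost_def by simp
  also have "\<dots> \<le> proj_route_cost x fl Q"
    unfolding proj_route_cost_def using b(1) fl dummy_cost_admissible
    by (intro member_le_sum) (auto simp: cost)
  finally show ?thesis by simp
qed

(* The projected profile of a profile tau of the 1-sum: dummy users use a0, the other
   users use the part of their route inside G, except the null set of users that touch
   an arc without flow, who switch to a cheapest route.  Its flow is the load below. *)
definition load :: "(real \<Rightarrow> ('e \<times> bool) list) \<Rightarrow> 'e \<times> bool \<Rightarrow> real" where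
  "load \<tau> a = extra a + flow I \<tau> a"

definition null_users :: "(real \<Rightarrow> ('e \<times> bool) list) \<Rightarrow> real set" where
  "null_users \<tau> = {x\<in>I. \<exists>a\<in>arcs E. flow I \<tau> a = 0 \<and> a \<in> set (\<tau> x)}"

definition proj_profile :: "(real \<Rightarrow> ('e \<times> bool) list) \<Rightarrow> real \<Rightarrow> ('e \<times> bool) list" where
  "proj_profile \<tau> x =
     (if \<not> relevant (od x) then [a0]
      else if x \<in> null_users \<tau> then cheapest (load \<tau>) x
      else filter (\<lambda>a. a \<in> arcs E) (\<tau> x))"

context
  fixes \<tau> :: "real \<Rightarrow> ('e \<times> bool) list"
  assumes equil: "equilibrium I (E \<union> E') ep od c \<tau>"
begin

lemma tau_route: "x \<in> I \<Longrightarrow> is_route (E \<union> E') ep (fst (od x)) (snd (od x)) (\<tau> x)"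
  using equil unfolding equilibrium_def strategy_profile_def by auto

lemma tau_optimal:
  "x \<in> I \<Longrightarrow> is_route (E \<union> E') ep (fst (od x)) (snd (od x)) P \<Longrightarrow>
    route_cost I c \<tau> x (\<tau> x) \<le> route_cost I c \<tau> x P"
  using equil unfolding equilibrium_def by auto

lemma measurable_od_tau: "{x\<in>I. \<Phi> (od x) (\<tau> x)} \<in> sets (lebesgue_on I)"
proof -
  let ?R = "{P. \<exists>s t. is_route (E \<union> E') ep s t P}"
  have "finite ?R" using G G' unfolding supply_graph_def by (intro routes_finite) simp
  moreover have "{x\<in>I. (od x, \<tau> x) = q} \<in> sets (lebesgue_on I)" for q
  proof -
    have "{x\<in>I. (od x, \<tau> x) = q} = {x\<in>I. od x = fst q} \<inter> {x\<in>I. \<tau> x = snd q}" by auto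
    then show ?thesis
      using measurable_od equil unfolding equilibrium_def strategy_profile_def by auto
  qed
  moreover have "(od x, \<tau> x) \<in> L \<times> ?R" if "x \<in> I" for x
    using od_in[OF that] tau_route[OF that] by blast
  ultimately have "{x\<in>I. case_prod \<Phi> (od x, \<tau> x)} \<in> sets (lebesgue_on I)"
    using finite_L by (intro measurable_finite_valued[of "L \<times> ?R"]) auto
  then show ?thesis by simp
qed

lemma null_users_null: "null_users \<tau> \<in> null_sets (lebesgue_on I)"
proof -
  interpret finite_measure "lebesgue_on I" by (rule user_interval_finite_measure[OF users])
  let ?A = "{a\<in>arcs E. flow I \<tau> a = 0}"
  have fin: "finite ?A" using G unfolding supply_graph_def arcs_def by simp
  have users_of: "{x\<in>I. a \<in> set (\<tau> x)} \<in> sets (lebesgue_on I)" for a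
    using measurable_od_tau[of "\<lambda>_ P. a \<in> set P"] .
  have Z: "null_users \<tau> = (\<Union>a\<in>?A. {x\<in>I. a \<in> set (\<tau> x)})" unfolding null_users_def by auto
  have "null_users \<tau> \<in> sets (lebesgue_on I)"
    unfolding Z using fin users_of by (intro sets.finite_UN) auto
  moreover have "measure (lebesgue_on I) (null_users \<tau>) \<le>
      (\<Sum>a\<in>?A. measure (lebesgue_on I) {x\<in>I. a \<in> set (\<tau> x)})"
    unfolding Z by (rule measure_UNION_le[OF fin]) (rule users_of)
  then have "measure (lebesgue_on I) (null_users \<tau>) = 0"
    using measure_nonneg[of "lebesgue_on I" "null_users \<tau>"] by (simp add: flow_def)
  ultimately show ?thesis by (rule null_set_user_interval[OF users])
qed

lemma relevant_route:
  assumes "x \<in> I" "relevant (od x)"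
  shows "is_route E ep (fst (od_proj x)) (snd (od_proj x)) (filter (\<lambda>a. a \<in> arcs E) (\<tau> x))"
  using proj_route[OF tau_route[OF assms(1)]] assms(2)
  unfolding od_proj_def proj_pair_def relevant_def by simp

lemma irrelevant_avoids_side:
  assumes "x \<in> I" "\<not> relevant (od x)"
  shows "set (\<tau> x) \<inter> arcs E = {}"
  using proj_trivial[OF tau_route[OF assms(1)]] assms(2) unfolding relevant_def by simp

lemma proj_profile_route:
  assumes x: "x \<in> I"
  shows "is_route E ep (fst (od_proj x)) (snd (od_proj x)) (proj_profile \<tau> x)"
proof (cases "relevant (od x)")
  case False
  then show ?thesis
    using arc_route[OF G a0] unfolding proj_profile_def od_proj_def dummy_pair_def by simp
next
  case True
  then show ?thesis
    using relevant_route[OF x True] cheapest_route(1)[OF relevant_route[OF x True]]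
    unfolding proj_profile_def by simp
qed

lemma proj_profile_measurable: "{x\<in>I. \<Phi> (proj_profile \<tau> x)} \<in> sets (lebesgue_on I)"
proof -
  let ?Z = "null_users \<tau>"
  have "{x\<in>I. \<Phi> (proj_profile \<tau> x)} =
      ({x\<in>I. \<Phi> (if \<not> relevant (od x) then [a0] else filter (\<lambda>a. a \<in> arcs E) (\<tau> x))} - ?Z)
      \<union> {x\<in>?Z. \<Phi> (proj_profile \<tau> x)}"
    unfolding proj_profile_def null_users_def by auto
  moreover have "{x\<in>?Z. \<Phi> (proj_profile \<tau> x)} \<in> sets (lebesgue_on I)"
    using null_users_null by (rule subset_null_measurable[OF users]) auto
  moreover have "?Z \<in> sets (lebesgue_on I)" using null_users_null by auto
  ultimately show ?thesis using measurable_od_tau by auto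
qed

lemma flow_proj:
  assumes a: "a \<in> arcs E"
  shows "flow I (proj_profile \<tau>) a = load \<tau> a"
proof -
  interpret finite_measure "lebesgue_on I" by (rule user_interval_finite_measure[OF users])
  let ?S = "{x\<in>I. a \<in> set (proj_profile \<tau> x)}"
  let ?T = "{x\<in>I. a \<in> set (\<tau> x)}"
  let ?D = "if a = a0 then {x\<in>I. \<not> relevant (od x)} else {}"
  let ?Z = "null_users \<tau>"
  have T: "?T \<in> sets (lebesgue_on I)" and D: "?D \<in> sets (lebesgue_on I)"
    using measurable_od_tau[of "\<lambda>_ P. a \<in> set P"] measurable_od by auto
  have disj: "?T \<inter> ?D = {}" using irrelevant_avoids_side a by auto
  have "measure (lebesgue_on I) ?S = measure (lebesgue_on I) (?S - ?Z)"
    using measure_Diff_null_set[OF proj_profile_measurable[of "\<lambda>P. a \<in> set P"] null_users_null]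
    by simp
  also have "?S - ?Z = (?T \<union> ?D) - ?Z"
    using irrelevant_avoids_side a unfolding proj_profile_def by auto
  also have "measure (lebesgue_on I) \<dots> = measure (lebesgue_on I) (?T \<union> ?D)"
    using measure_Diff_null_set[OF sets.Un[OF T D] null_users_null] .
  also have "\<dots> = flow I \<tau> a + extra a"
    using finite_measure_Union[OF T D disj] unfolding flow_def extra_def dummy_mass_def by simp
  finally show ?thesis unfolding flow_def load_def by simp
qed

lemma route_cost_proj:
  "set P \<subseteq> arcs E \<Longrightarrow> route_cost I cost_proj (proj_profile \<tau>) x P = proj_route_cost x (load \<tau>) P"
  unfolding route_cost_def proj_route_cost_def using flow_proj by (intro sum.cong) auto

end

context
  fixes \<tau> :: "real \<Rightarrow> ('e \<times> bool) list"
  assumes equil: "equilibrium I (E \<union> E') ep od c \<tau>"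
    and gap: "\<And>a. a \<in> arcs E \<Longrightarrow> flow I \<tau> a = 0 \<or> s0 \<le> flow I \<tau> a"
begin

lemma cost_proj_load:
  assumes x: "x \<in> I" and rel: "relevant (od x)" and a: "a \<in> arcs E"
  shows "c x a (flow I \<tau> a) \<le> cost_proj x a (load \<tau> a)"
    and "flow I \<tau> a \<noteq> 0 \<Longrightarrow> cost_proj x a (load \<tau> a) = c x a (flow I \<tau> a)"
proof -
  have cost: "cost_proj x a t = shifted_cost s0 (extra a) (c x a) t" for t
    unfolding cost_proj_def using rel by simp
  have at_shift: "c x a 0 \<le> cost_proj x a (load \<tau> a)" if "flow I \<tau> a = 0"
  proof -
    have "c x a 0 \<le> c x a s0"
      using cost_admissible[OF x a] s0 by (auto simp: strict_mono_on_def less_imp_le)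
    then show ?thesis using shifted_cost_at_shift[OF s0 extra_nonneg] that
      unfolding cost load_def by simp
  qed
  have shift: "cost_proj x a (load \<tau> a) = c x a (flow I \<tau> a)" if "flow I \<tau> a \<noteq> 0"
    using gap[OF a] that shifted_cost_shift[OF s0 extra_nonneg] unfolding cost load_def by simp
  show "c x a (flow I \<tau> a) \<le> cost_proj x a (load \<tau> a)"
    using at_shift shift by (cases "flow I \<tau> a = 0") auto
  show "flow I \<tau> a \<noteq> 0 \<Longrightarrow> cost_proj x a (load \<tau> a) = c x a (flow I \<tau> a)" by (rule shift)
qed

(* A regular user's projected route is optimal: a cheaper route in G could be spliced
   into his route in the 1-sum (proj_reroute), contradicting the equilibrium property. *)
lemma relevant_optimal:
  assumes x: "x \<in> I" and rel: "relevant (od x)" and regular: "x \<notin> null_users \<tau>"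
    and Q: "is_route E ep (fst (od_proj x)) (snd (od_proj x)) Q"
  shows "proj_route_cost x (load \<tau>) (filter (\<lambda>a. a \<in> arcs E) (\<tau> x)) \<le> proj_route_cost x (load \<tau>) Q"
proof -
  let ?P = "\<tau> x"
  let ?cost = "\<lambda>A. \<Sum>a\<in>A. c x a (flow I \<tau> a)"
  have QE: "set Q \<subseteq> arcs E" by (rule route_arcs[OF Q])
  obtain P' where P': "is_route (E \<union> E') ep (fst (od x)) (snd (od x)) P'"
    and setP': "set P' = set Q \<union> (set ?P - arcs E)"
    using proj_reroute[OF tau_route[OF equil x]] rel Q
    unfolding od_proj_def proj_pair_def relevant_def by auto
  have "proj_route_cost x (load \<tau>) (filter (\<lambda>a. a \<in> arcs E) ?P) = ?cost (set ?P \<inter> arcs E)"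
    unfolding proj_route_cost_def using regular x cost_proj_load(2)[OF x rel]
    by (intro sum.cong) (auto simp: null_users_def)
  also have "\<dots> = route_cost I c \<tau> x ?P - ?cost (set ?P - arcs E)"
    unfolding route_cost_def by (simp add: sum.Int_Diff[of "set ?P" _ "arcs E"])
  also have "\<dots> \<le> route_cost I c \<tau> x P' - ?cost (set ?P - arcs E)"
    using tau_optimal[OF equil x P'] by simp
  also have "\<dots> = ?cost (set Q)"
    unfolding route_cost_def setP' using QE by (subst sum.union_disjoint) auto
  also have "\<dots> \<le> proj_route_cost x (load \<tau>) Q"
    unfolding proj_route_cost_def using cost_proj_load(1)[OF x rel] QE by (intro sum_mono) auto
  finally show ?thesis .
qed

lemma equilibrium_proj: "equilibrium I E ep od_proj cost_proj (proj_profile \<tau>)"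
  unfolding equilibrium_def strategy_profile_def
proof (intro conjI ballI allI impI)
  fix x assume "x \<in> I"
  then show "is_route E ep (fst (od_proj x)) (snd (od_proj x)) (proj_profile \<tau> x)"
    by (rule proj_profile_route[OF equil])
next
  fix P show "{x\<in>I. proj_profile \<tau> x = P} \<in> sets (lebesgue_on I)"
    by (rule proj_profile_measurable[OF equil])
next
  fix x Q assume x: "x \<in> I" and Q: "is_route E ep (fst (od_proj x)) (snd (od_proj x)) Q"
  have load_nonneg: "0 \<le> load \<tau> a" for a
    using extra_nonneg[of a] unfolding load_def flow_def by simp
  have "proj_route_cost x (load \<tau>) (proj_profile \<tau> x) \<le> proj_route_cost x (load \<tau>) Q"
    using dummy_optimal[OF _ load_nonneg Q] cheapest_route(2)[OF _ Q]
      relevant_route[OF equil x] relevant_optimal[OF x _ _ Q]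
    unfolding proj_profile_def by auto
  then show "route_cost I cost_proj (proj_profile \<tau>) x (proj_profile \<tau> x) \<le>
      route_cost I cost_proj (proj_profile \<tau>) x Q"
    using route_arcs[OF proj_profile_route[OF equil x]] route_arcs[OF Q]
    by (simp add: route_cost_proj[OF equil])
qed

end

end

lemma positive_lower_bound:
  assumes "finite (A :: real set)"
  shows "\<exists>s0>0. \<forall>y\<in>A. 0 < y \<longrightarrow> s0 \<le> y"
proof (intro exI conjI ballI impI)
  let ?B = "insert 1 {y\<in>A. 0 < y}"
  have "finite ?B" using assms by simp
  then show "0 < Min ?B" by (subst Min_gr_iff) auto
  show "Min ?B \<le> y" if "y \<in> A" "0 < y" for y
    using \<open>finite ?B\<close> that by (intro Min_le) auto
qed

(* If G has the strong uniqueness property, two equilibria of the 1-sum induce the same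
   flow on G: their projections are equilibria of one projected game (with s0 chosen
   below all positive flows of both), whose flows agree, and the dummy flow is the same. *)
lemma (in one_sum) flows_agree_on_side:
  assumes SU: "strong_uniqueness_property V E ep" and L: "finite L"
    and users: "user_interval I" and od: "od_assignment I L od" and costs: "cost_assignment I (E \<union> E') c"
    and eq1: "equilibrium I (E \<union> E') ep od c \<sigma>" and eq2: "equilibrium I (E \<union> E') ep od c \<sigma>'"
  shows "\<forall>a\<in>arcs E. flow I \<sigma> a = flow I \<sigma>' a"
proof (cases "arcs E = {}")
  case False
  then obtain a0 where a0: "a0 \<in> arcs E" by blast
  have fin: "finite (flow I \<sigma> ` arcs E \<union> flow I \<sigma>' ` arcs E)"
    using G unfolding supply_graph_def arcs_def by simp
  obtain s0 where s0: "0 < s0"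
    and bound: "\<forall>y\<in>flow I \<sigma> ` arcs E \<union> flow I \<sigma>' ` arcs E. 0 < y \<longrightarrow> s0 \<le> y"
    using positive_lower_bound[OF fin] by blast
  have gap: "flow I \<tau> a = 0 \<or> s0 \<le> flow I \<tau> a" if "\<tau> \<in> {\<sigma>, \<sigma>'}" "a \<in> arcs E" for \<tau> a
  proof -
    have "flow I \<tau> a \<in> flow I \<sigma> ` arcs E \<union> flow I \<sigma>' ` arcs E" using that by auto
    then have "0 < flow I \<tau> a \<longrightarrow> s0 \<le> flow I \<tau> a" using bound by blast
    moreover have "0 \<le> flow I \<tau> a" unfolding flow_def by simp
    ultimately show ?thesis by linarith
  qed
  interpret side_reduction V V' E E' ep v L I od c a0 s0
    using L users od costs a0 s0 by unfold_locales
  have "uniqueness_property V E ep V L_proj"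
    using SU demand_proj unfolding strong_uniqueness_property_def by blast
  then have "\<forall>a\<in>arcs E. flow I (proj_profile \<sigma>) a = flow I (proj_profile \<sigma>') a"
    using users od_assignment_proj cost_assignment_proj
      equilibrium_proj[OF eq1 gap] equilibrium_proj[OF eq2 gap]
    unfolding uniqueness_property_def by blast
  then show ?thesis using flow_proj[OF eq1] flow_proj[OF eq2] unfolding load_def by simp
qed simp

theorem lemma2:
  fixes V V' :: "'v set" and E E' :: "'e set" and ep :: "'e \<Rightarrow> 'v \<times> 'v" and v :: 'v
  assumes "supply_graph V E ep" and "supply_graph V' E' ep"
    and "strong_uniqueness_property V E ep" and "strong_uniqueness_property V' E' ep"
    and "V \<inter> V' = {v}"
  shows "strong_uniqueness_property (V \<union> V') (E \<union> E') ep"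
  unfolding strong_uniqueness_property_def uniqueness_property_def
proof (intro allI impI)
  fix T L I od c \<sigma> \<sigma>'
  assume H: "demand_digraph (V \<union> V') T L" and users: "user_interval I"
    and od: "od_assignment I L od" and costs: "cost_assignment I (E \<union> E') c"
    and eq1: "equilibrium I (E \<union> E') ep od c \<sigma>" and eq2: "equilibrium I (E \<union> E') ep od c \<sigma>'"
  interpret one_sum V V' E E' ep v using assms by unfold_locales
  interpret sw: one_sum V' V E' E ep v by (rule swap)
  have "L \<subseteq> (V \<union> V') \<times> (V \<union> V')" "finite ((V \<union> V') \<times> (V \<union> V'))"
    using H assms(1,2) unfolding demand_digraph_def supply_graph_def by auto
  then have L: "finite L" by (rule finite_subset)
  have "\<forall>a\<in>arcs E. flow I \<sigma> a = flow I \<sigma>' a"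
    by (rule flows_agree_on_side[OF assms(3) L users od costs eq1 eq2])
  moreover have "\<forall>a\<in>arcs E'. flow I \<sigma> a = flow I \<sigma>' a"
    using sw.flows_agree_on_side[OF assms(4) L users od] costs eq1 eq2
    unfolding Un_commute[of E' E] by blast
  ultimately show "\<forall>a\<in>arcs (E \<union> E'). flow I \<sigma> a = flow I \<sigma>' a"
    unfolding arcs_Un by blast
qed

end
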